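(* Let $u,v\in\mathbb{R}^n$ be nonzero and $A=uv^T$. Then $A$ is a Karamardian matrix if and only if $u$ is unisigned (i.e. $u\ge 0$ or $u\le 0$ entrywise) and $u^Tv>0$.
   Context: For $A\in\mathbb{R}^{n\times n}$ let $R(A)$, $N(A^T)$ denote the range of $A$ and null space of $A^T$, let $K_A=\mathbb{R}^n_+\cap R(A)$ and $K_A^*=\{y\in\mathbb{R}^n: x^Ty\ge 0 \text{ for all } x\in K_A\}$ (one has $K_A^*=\mathbb{R}^n_++N(A^T)$, and its interior is $\{a+b: a>0,\ b\in N(A^T)\}$). For $q\in\mathbb{R}^n$, the problem LCP$(A,K_A,q)$ is to find $x$ with $x\in K_A$, $Ax+q\in K_A^*$ and $x^T(Ax+q)=0$. $A$ is called a Karamardian matrix if $K_A\ne\{0\}$ and there exists $d$ in the interior of $K_A^*$ such that both LCP$(A,K_A,0)$ and LCP$(A,K_A,d)$ have $x=0$ as their only solution. *)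

theory Defs
  imports "HOL-Analysis.Analysis"
begin

definition nonneg_orthant :: "(real ^ 'n) set" where
  "nonneg_orthant = {x. \<forall>i. 0 \<le> x $ i}"

definition K_cone :: "real ^ 'n ^ 'n \<Rightarrow> (real ^ 'n) set" where
  "K_cone A = nonneg_orthant \<inter> range (\<lambda>x. A *v x)"

definition dual_cone :: "(real ^ 'n) set \<Rightarrow> (real ^ 'n) set" where
  "dual_cone K = {y. \<forall>x\<in>K. 0 \<le> x \<bullet> y}"

definition LCP_sol :: "real ^ 'n ^ 'n \<Rightarrow> (real ^ 'n) set \<Rightarrow> real ^ 'n \<Rightarrow> (real ^ 'n) set" where
  "LCP_sol A K q = {x. x \<in> K \<and> A *v x + q \<in> dual_cone K \<and> x \<bullet> (A *v x + q) = 0}"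

definition karamardian :: "real ^ 'n ^ 'n \<Rightarrow> bool" where
  "karamardian A \<longleftrightarrow> K_cone A \<noteq> {0} \<and>
     (\<exists>d \<in> interior (dual_cone (K_cone A)).
        LCP_sol A (K_cone A) 0 = {0} \<and> LCP_sol A (K_cone A) d = {0})"

definition outer :: "real ^ 'n \<Rightarrow> real ^ 'n \<Rightarrow> real ^ 'n ^ 'n" where
  "outer u v = (\<chi> i j. u $ i * v $ j)"

end

theory Submission
  imports Defs
begin

text \<open>Every vector in the range of \<open>u v\<^sup>T\<close> is a multiple of \<open>u\<close>, so \<open>K_A\<close> is the ray
  spanned by \<open>u\<close> (or \<open>-u\<close>) when \<open>u\<close> is unisigned, and \<open>{0}\<close> otherwise. On this ray the
  cone LCP with data \<open>q\<close> reduces, via \<open>x = t u\<close>, to the scalar complementarity problem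
  \<open>t \<ge> 0, a t + b \<ge> 0, t (a t + b) = 0\<close> with \<open>a = (u\<^sup>Tv) |u|\<^sup>2\<close> and \<open>b = u\<^sup>Tq\<close>. For \<open>q = 0\<close>
  it has only the trivial solution iff \<open>a \<noteq> 0\<close>; for \<open>q\<close> in the interior of the dual cone,
  i.e. \<open>b > 0\<close>, iff \<open>a \<ge> 0\<close>. Together: \<open>a > 0\<close>, i.e. \<open>u\<^sup>Tv > 0\<close>.\<close>

lemma outer_mult_vec: "outer u v *v x = (v \<bullet> x) *\<^sub>R u"
  by (simp add: outer_def matrix_vector_mult_def inner_vec_def vec_eq_iff
      sum_distrib_left mult.assoc mult.commute mult.left_commute)

lemma outer_uminus: "outer (-u) (-v) = outer u v"
  by (simp add: outer_def)

lemma K_cone_outer: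
  fixes u v :: "real ^ 'n"
  assumes "v \<noteq> 0"
  shows "K_cone (outer u v) = {s *\<^sub>R u | s. \<forall>i. 0 \<le> s * u $ i}"
proof -
  have "range (\<lambda>x. outer u v *v x) = range (\<lambda>s. s *\<^sub>R u)"
  proof (intro equalityI subsetI)
    fix x assume "x \<in> range (\<lambda>x. outer u v *v x)"
    then show "x \<in> range (\<lambda>s. s *\<^sub>R u)" by (auto simp: outer_mult_vec)
  next
    fix x assume "x \<in> range (\<lambda>s. s *\<^sub>R u)"
    then obtain s where "x = s *\<^sub>R u" by blast
    then have "x = outer u v *v ((s / (v \<bullet> v)) *\<^sub>R v)"
      using assms by (simp add: outer_mult_vec)
    then show "x \<in> range (\<lambda>x. outer u v *v x)" by blast
  qed
  then show ?thesis
    unfolding K_cone_def nonneg_orthant_def by auto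
qed

lemma unisigned_if_K_cone_outer_nontrivial:
  fixes u v :: "real ^ 'n"
  assumes "v \<noteq> 0" and "K_cone (outer u v) \<noteq> {0}"
  shows "(\<forall>i. 0 \<le> u $ i) \<or> (\<forall>i. u $ i \<le> 0)"
proof -
  obtain s where "s \<noteq> 0" and nonneg: "\<And>i. 0 \<le> s * u $ i"
    using assms(2) unfolding K_cone_outer[OF assms(1)] by (auto simp: set_eq_iff)
  then consider "s > 0" | "s < 0" by linarith
  then show ?thesis
    by cases (metis nonneg zero_le_mult_iff not_le)+
qed

lemma K_cone_outer_nonneg:
  fixes u v :: "real ^ 'n"
  assumes u: "\<forall>i. 0 \<le> u $ i" "u \<noteq> 0" and "v \<noteq> 0"
  shows "K_cone (outer u v) = {t *\<^sub>R u | t. t \<ge> 0}"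
proof -
  obtain i where "u $ i \<noteq> 0" using u(2) by (auto simp: vec_eq_iff)
  with u(1) have "u $ i > 0" by (simp add: order_less_le)
  then have "(\<forall>i. 0 \<le> s * u $ i) \<longleftrightarrow> s \<ge> 0" for s
    using u(1) by (metis zero_le_mult_iff not_le)
  then show ?thesis
    unfolding K_cone_outer[OF \<open>v \<noteq> 0\<close>] by simp
qed

lemma dual_cone_ray: "dual_cone {t *\<^sub>R u | t. t \<ge> 0} = {y. u \<bullet> y \<ge> 0}"
  unfolding dual_cone_def by (auto, metis scale_one zero_le_one)

definition scalar_LCP_sol :: "real \<Rightarrow> real \<Rightarrow> real set" where
  "scalar_LCP_sol a b = {t. 0 \<le> t \<and> 0 \<le> a * t + b \<and> t * (a * t + b) = 0}"

lemma scalar_LCP_sol_homogeneous_eq_0_iff: "scalar_LCP_sol a 0 = {0} \<longleftrightarrow> a \<noteq> 0"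
proof
  assume "scalar_LCP_sol a 0 = {0}"
  then have "1 \<notin> scalar_LCP_sol a 0" by simp
  then show "a \<noteq> 0" by (auto simp: scalar_LCP_sol_def)
qed (auto simp: scalar_LCP_sol_def)

lemma scalar_LCP_sol_pos_eq_0_iff:
  assumes "b > 0"
  shows "scalar_LCP_sol a b = {0} \<longleftrightarrow> a \<ge> 0"
proof
  assume sol: "scalar_LCP_sol a b = {0}"
  show "a \<ge> 0"
  proof (rule ccontr)
    assume "\<not> a \<ge> 0"
    then have "- b / a \<in> scalar_LCP_sol a b" and "- b / a \<noteq> 0"
      using assms by (auto simp: scalar_LCP_sol_def divide_le_0_iff)
    with sol show False by blast
  qed
next
  assume "a \<ge> 0"
  then have "0 \<le> t \<Longrightarrow> a * t + b > 0" for t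
    using assms by (simp add: add_nonneg_pos)
  then show "scalar_LCP_sol a b = {0}"
    unfolding scalar_LCP_sol_def using assms by force
qed

lemma LCP_sol_outer_ray:
  fixes u v q :: "real ^ 'n"
  shows "LCP_sol (outer u v) {t *\<^sub>R u | t. t \<ge> 0} q
    = (\<lambda>t. t *\<^sub>R u) ` scalar_LCP_sol ((u \<bullet> v) * (u \<bullet> u)) (u \<bullet> q)"
proof -
  have "outer u v *v (t *\<^sub>R u) + q = (t * (u \<bullet> v)) *\<^sub>R u + q" for t
    by (simp add: outer_mult_vec inner_commute)
  then show ?thesis
    unfolding LCP_sol_def dual_cone_ray scalar_LCP_sol_def
    by (auto simp: inner_add_right algebra_simps)
qed

lemma LCP_sol_outer_ray_eq_0_iff:
  fixes u v q :: "real ^ 'n"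
  assumes "u \<noteq> 0"
  shows "LCP_sol (outer u v) {t *\<^sub>R u | t. t \<ge> 0} q = {0}
    \<longleftrightarrow> scalar_LCP_sol ((u \<bullet> v) * (u \<bullet> u)) (u \<bullet> q) = {0}"
proof -
  have "inj (\<lambda>t. t *\<^sub>R u)" using assms by (auto intro: injI)
  then show ?thesis
    unfolding LCP_sol_outer_ray using inj_image_eq_iff[of _ _ "{0}"] by force
qed

lemma karamardian_outer_nonneg:
  fixes u v :: "real ^ 'n"
  assumes "\<forall>i. 0 \<le> u $ i" and "u \<noteq> 0" and "v \<noteq> 0"
  shows "karamardian (outer u v) \<longleftrightarrow> u \<bullet> v > 0"
proof -
  define a where "a = (u \<bullet> v) * (u \<bullet> u)"
  have K: "K_cone (outer u v) = {t *\<^sub>R u | t. t \<ge> 0}"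
    using K_cone_outer_nonneg assms by blast
  have "u \<in> K_cone (outer u v)" unfolding K by (auto intro!: exI[of _ 1])
  then have K_nontrivial: "K_cone (outer u v) \<noteq> {0}" using \<open>u \<noteq> 0\<close> by auto
  have interior_dual: "interior (dual_cone (K_cone (outer u v))) = {d. u \<bullet> d > 0}"
    unfolding K dual_cone_ray using \<open>u \<noteq> 0\<close> by simp
  have "u \<bullet> u > 0" using \<open>u \<noteq> 0\<close> by simp
  have "LCP_sol (outer u v) (K_cone (outer u v)) q = {0} \<longleftrightarrow> scalar_LCP_sol a (u \<bullet> q) = {0}"
    for q unfolding K a_def by (rule LCP_sol_outer_ray_eq_0_iff[OF \<open>u \<noteq> 0\<close>])
  then have "karamardian (outer u v) \<longleftrightarrow>
      scalar_LCP_sol a 0 = {0} \<and> (\<exists>d. u \<bullet> d > 0 \<and> scalar_LCP_sol a (u \<bullet> d) = {0})"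
    unfolding karamardian_def interior_dual using K_nontrivial by simp
  also have "\<dots> \<longleftrightarrow> a \<noteq> 0 \<and> a \<ge> 0"
    using \<open>u \<bullet> u > 0\<close>
    by (metis scalar_LCP_sol_homogeneous_eq_0_iff scalar_LCP_sol_pos_eq_0_iff)
  also have "\<dots> \<longleftrightarrow> a > 0" by auto
  also have "\<dots> \<longleftrightarrow> u \<bullet> v > 0" using \<open>u \<bullet> u > 0\<close> unfolding a_def
    by (metis mult_pos_pos zero_less_mult_pos2)
  finally show ?thesis .
qed

theorem mainTheorem6:
  fixes u v :: "real ^ 'n"
  assumes "u \<noteq> 0" and "v \<noteq> 0"
  shows "karamardian (outer u v) \<longleftrightarrow>
           ((\<forall>i. 0 \<le> u $ i) \<or> (\<forall>i. u $ i \<le> 0)) \<and> u \<bullet> v > 0"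
proof -
  consider "\<forall>i. 0 \<le> u $ i" | "\<forall>i. 0 \<le> (-u) $ i"
    | "\<not> ((\<forall>i. 0 \<le> u $ i) \<or> (\<forall>i. u $ i \<le> 0))"
    by fastforce
  then show ?thesis
  proof cases
    case 1
    then show ?thesis using karamardian_outer_nonneg[OF 1 assms] by simp
  next
    case 2
    then have "karamardian (outer (-u) (-v)) \<longleftrightarrow> (-u) \<bullet> (-v) > 0"
      using karamardian_outer_nonneg[of "-u" "-v"] assms by simp
    then show ?thesis using 2 by (simp add: outer_uminus)
  next
    case 3
    then show ?thesis
      using unisigned_if_K_cone_outer_nontrivial[OF \<open>v \<noteq> 0\<close>]
      unfolding karamardian_def by blast
  qed
qed

end
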